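(* Let $n\ge5$. (a) Let $Y=Y^{(n)}=(Y_{n+1},Y_n,\ldots,Y_1)$ be a $\{0,1\}$-valued Markov chain (run in the order $Y_{n+1},\ldots,Y_1$) with $Y_{n+1}=1$, transition probabilities $\mathbb{P}(Y_i=0\mid Y_{i+1}=0)=p_i$, $\mathbb{P}(Y_i=1\mid Y_{i+1}=0)=q_i=1-p_i$, $\mathbb{P}(Y_i=0\mid Y_{i+1}=1)=1$ for $i=3,\ldots,n$, where $p_i\in(0,1)$, and with $Y_2=0$, $Y_1=1$ almost surely; set $p_2:=1$. Assume $\frac{p_iq_{i-1}}{p_{i-2}q_i}>1$ for every $4\le i\le n-1$. Then, writing $Y$ also for $(Y_n,\ldots,Y_1)$, $$\mathbb{P}(Y\in\Lambda_2(n))>\mathbb{P}(Y\in\Lambda_1(n)).$$ (b) Let $\theta>0$ and let $\eta=(\eta_n,\ldots,\eta_1)$ have the law of $(\xi_n,\ldots,\xi_1)$ conditioned on $(\xi_n,\ldots,\xi_1)\in\Delta_n$. Then $\mathbb{P}(\eta\in\Lambda_2(n))>\mathbb{P}(\eta\in\Lambda_1(n))$, and $$\mathbb{P}(\eta\in\Lambda_2(n))=\sum_{r\in\Lambda_1(n)}\left(\prod_{i=1}^{|r|-1}\frac{\sigma_i(r)-1}{n+1-\sigma_i(r)}\right)\mathbb{P}(\eta=r).$$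
   Context: Let $\xi_1,\xi_2,\ldots$ be independent Bernoulli random variables with $\mathbb{P}(\xi_i=1)=\theta/(\theta+i-1)$, $\mathbb{P}(\xi_i=0)=(i-1)/(\theta+i-1)$. For $n\ge2$, $\Delta_n$ is the set of $(a_n,a_{n-1},\ldots,a_1)\in\{0,1\}^n$ with $a_n=0$, $a_1=1$, and no index $2\le i\le n$ with $a_i=a_{i-1}=1$. For $r=(r_n,\ldots,r_1)\in\Delta_n$, $|r|$ denotes the number of indices $i$ with $r_i=1$. Set $\sigma_0(r)=n+1$, and for $j=1,\ldots,|r|$ let $\sigma_j(r)$ be the largest index $i<\sigma_{j-1}(r)$ with $r_i=1$ (so $\sigma_{|r|}(r)=1$). The numbers $\sigma_{l-1}(r)-\sigma_l(r)$, $l=1,\ldots,|r|$, are the successive spacings (cycle lengths). $r\in\Delta_n$ is weakly increasing if $\sigma_{l-1}(r)-\sigma_l(r)\le\sigma_l(r)-\sigma_{l+1}(r)$ for all $l=1,\ldots,|r|-1$, and weakly decreasing if $\sigma_{l-1}(r)-\sigma_l(r)\ge\sigma_l(r)-\sigma_{l+1}(r)$ for all such $l$. $\Lambda_1(n)$ (resp. $\Lambda_2(n)$) is the set of weakly increasing (resp. weakly decreasing) elements of $\Delta_n$. *)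

theory Defs
  imports "HOL-Probability.Probability"
begin

text \<open>A 0/1 vector (r_n,...,r_1) is represented by r :: nat => bool with r i = True iff r_i = 1,
  and r i = False for i outside {1..n}.\<close>

definition Delta :: "nat \<Rightarrow> (nat \<Rightarrow> bool) set" where
  "Delta n = {r. (\<forall>i. r i \<longrightarrow> i \<in> {1..n}) \<and> \<not> r n \<and> r 1 \<and>
                 (\<forall>i\<in>{2..n}. \<not> (r i \<and> r (i - 1)))}"

definition ones :: "nat \<Rightarrow> (nat \<Rightarrow> bool) \<Rightarrow> nat" where
  "ones n r = card {i \<in> {1..n}. r i}"

primrec sigma :: "nat \<Rightarrow> (nat \<Rightarrow> bool) \<Rightarrow> nat \<Rightarrow> nat" where
  "sigma n r 0 = n + 1"
| "sigma n r (Suc j) = Max {i \<in> {1..<sigma n r j}. r i}"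

definition Lambda1 :: "nat \<Rightarrow> (nat \<Rightarrow> bool) set" where
  "Lambda1 n = {r \<in> Delta n. \<forall>l \<in> {1..ones n r - 1}.
      sigma n r (l - 1) - sigma n r l \<le> sigma n r l - sigma n r (l + 1)}"

definition Lambda2 :: "nat \<Rightarrow> (nat \<Rightarrow> bool) set" where
  "Lambda2 n = {r \<in> Delta n. \<forall>l \<in> {1..ones n r - 1}.
      sigma n r (l - 1) - sigma n r l \<ge> sigma n r l - sigma n r (l + 1)}"

text \<open>Markov chain of part (a).  ychain p m s is the law of (Y_(m+2),...,Y_1) given Y_(m+3) = s:
  from state 1 the next value is 0; from state 0 the next value is 0 w.p. p_i, 1 w.p. q_i = 1 - p_i
  (i = 3..n); finally Y_2 = 0, Y_1 = 1 almost surely.\<close>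
primrec ychain :: "(nat \<Rightarrow> real) \<Rightarrow> nat \<Rightarrow> bool \<Rightarrow> (nat \<Rightarrow> bool) pmf" where
  "ychain p 0 s = return_pmf (\<lambda>i. i = 1)"
| "ychain p (Suc m) s =
     bind_pmf (if s then return_pmf False else bernoulli_pmf (1 - p (m + 3)))
       (\<lambda>b. map_pmf (\<lambda>rest. rest(m + 3 := b)) (ychain p m b))"

definition Ylaw :: "(nat \<Rightarrow> real) \<Rightarrow> nat \<Rightarrow> (nat \<Rightarrow> bool) pmf" where
  "Ylaw p n = ychain p (n - 2) True"

definition xilaw :: "real \<Rightarrow> nat \<Rightarrow> (nat \<Rightarrow> bool) pmf" where
  "xilaw \<theta> n = Pi_pmf {1..n} False (\<lambda>i. bernoulli_pmf (\<theta> / (\<theta> + real i - 1)))"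

definition etalaw :: "real \<Rightarrow> nat \<Rightarrow> (nat \<Rightarrow> bool) pmf" where
  "etalaw \<theta> n = cond_pmf (xilaw \<theta> n) (Delta n)"

end

theory Submission
  imports Defs
begin

text \<open>
  Reflecting positions by t \<mapsto> n + 2 - t, with position 1 kept fixed, is an involution of
  Delta n exchanging sigma 0 = n + 1 with sigma |r| = 1; it therefore reverses the sequence of
  cycle lengths and maps Lambda1 n onto Lambda2 n. Both laws have the product form
  P(r) = K * prod g {t \<in> {2..n}. r t} with g decreasing on {3..n-1}: g t = q_t / (p_t p_(t-1))
  for the Markov chain, which decreases exactly by the ratio hypothesis, and g t = \<theta> / (t - 1)
  for eta. For weakly increasing r the positions sigma j form a concave sequence, so
  sigma j + sigma (|r| - j) \<ge> n + 2, and comparing factors gives P(r) \<le> P(reflect r), strictly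
  for the vector with ones at 1 and n - 1. Summing over Lambda1 n gives both inequalities; for eta
  the factor ratio g(n + 2 - t) / g(t) = (t - 1) / (n + 1 - t) gives the identity.
\<close>

section \<open>Binary vectors and their cycle starts\<close>

lemma Delta_D:
  assumes "r \<in> Delta n"
  shows Delta_support: "\<And>i. r i \<Longrightarrow> i \<in> {1..n}"
    and Delta_1: "r 1" and Delta_n: "\<not> r n" and Delta_2: "\<not> r 2" and Delta_ge_2: "2 \<le> n"
    and Delta_no_adjacent: "\<And>i. r i \<Longrightarrow> \<not> r (Suc i)"
proof -
  have adj: "\<And>i. i \<in> {2..n} \<Longrightarrow> \<not> (r i \<and> r (i - 1))"
    using assms by (simp add: Delta_def)
  show supp: "\<And>i. r i \<Longrightarrow> i \<in> {1..n}" and r1: "r 1" and rn: "\<not> r n"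
    using assms by (simp_all add: Delta_def)
  show n2: "2 \<le> n" using supp[OF r1] rn r1 by (cases "n = 1") auto
  show "\<not> r 2" using adj[of 2] n2 r1 by simp
  show "\<not> r (Suc i)" if "r i" for i
    using adj[of "Suc i"] supp[OF that] supp[of "Suc i"] that by auto
qed

lemma Delta_Suc_drop_last:
  assumes "r \<in> Delta (Suc N)" "\<not> r N"
  shows "r \<in> Delta N"
  using assms by (auto simp: Delta_def le_Suc_eq)

lemma Delta_Suc_Suc_drop_one:
  assumes D: "r \<in> Delta (Suc (Suc N))" and "r (Suc N)" "1 \<le> N"
  shows "r(Suc N := False) \<in> Delta N"
proof -
  have "i \<in> {1..N}" if "r i" "i \<noteq> Suc N" for i
    using Delta_support[OF D that(1)] Delta_n[OF D] that by (auto simp: le_Suc_eq)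
  moreover have "\<not> r N" using Delta_no_adjacent[OF D, of N] assms(2) by blast
  ultimately show ?thesis using D assms(3) unfolding Delta_def by auto
qed

lemma Delta_le_3:
  assumes "r \<in> Delta N" "N \<le> 3"
  shows "r = (\<lambda>i. i = 1)"
proof
  fix i
  show "r i = (i = 1)"
    using Delta_support[OF assms(1), of i] Delta_1[OF assms(1)] Delta_2[OF assms(1)]
      Delta_n[OF assms(1)] assms(2)
    by (cases "i = 3"; cases "N = 3") (auto simp: numeral_3_eq_3 le_Suc_eq numeral_2_eq_2)
qed

lemma finite_Delta: "finite (Delta n)"
proof (rule finite_subset)
  show "Delta n \<subseteq> (\<lambda>A i. i \<in> A) ` Pow {1..n}"
  proof
    fix r assume "r \<in> Delta n"
    then have "r = (\<lambda>i. i \<in> {i \<in> {1..n}. r i})" using Delta_support by blast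
    then show "r \<in> (\<lambda>A i. i \<in> A) ` Pow {1..n}" by blast
  qed
qed simp

lemma Lambda1_subset_Delta: "Lambda1 n \<subseteq> Delta n"
  by (auto simp: Lambda1_def)

lemma image_minus_atLeastAtMost: "(\<lambda>j. k - j) ` {1..k} = {..<(k::nat)}"
proof
  show "{..<k} \<subseteq> (\<lambda>j. k - j) ` {1..k}"
  proof
    fix i assume "i \<in> {..<k}"
    then have "i = k - (k - i)" "k - i \<in> {1..k}" by auto
    then show "i \<in> (\<lambda>j. k - j) ` {1..k}" by (rule image_eqI)
  qed
qed auto

lemma sigma_eqI:
  fixes f :: "nat \<Rightarrow> nat"
  assumes dec: "\<And>i j. i < j \<Longrightarrow> j \<le> k \<Longrightarrow> f j < f i"
    and f0: "f 0 = n + 1"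
    and img: "f ` {1..k} = {i \<in> {1..n}. r i}"
    and "j \<le> k"
  shows "sigma n r j = f j"
  using \<open>j \<le> k\<close>
proof (induction j)
  case 0
  then show ?case by (simp add: f0)
next
  case (Suc j)
  have "f j \<le> n + 1" using dec[of 0 j] f0 Suc.prems by (cases j) auto
  have below: "{i \<in> {1..<f j}. r i} = f ` {Suc j..k}"
  proof (intro set_eqI iffI)
    fix i assume i: "i \<in> {i \<in> {1..<f j}. r i}"
    then have "i \<in> f ` {1..k}" using \<open>f j \<le> n + 1\<close> img by auto
    then obtain m where m: "m \<in> {1..k}" "i = f m" by auto
    have "Suc j \<le> m"
    proof (rule ccontr)
      assume "\<not> Suc j \<le> m"
      then have "f j \<le> f m" using dec[of m j] Suc.prems by (cases "m = j") auto
      then show False using m i by simp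
    qed
    then show "i \<in> f ` {Suc j..k}" using m by auto
  next
    fix i assume "i \<in> f ` {Suc j..k}"
    then obtain m where m: "m \<in> {Suc j..k}" "i = f m" by auto
    then have "i \<in> {i \<in> {1..n}. r i}" using img by auto
    then show "i \<in> {i \<in> {1..<f j}. r i}" using dec[of j m] m by auto
  qed
  have "Max (f ` {Suc j..k}) = f (Suc j)"
  proof (rule Max_eqI)
    fix y assume "y \<in> f ` {Suc j..k}"
    then show "y \<le> f (Suc j)" using dec[of "Suc j"] by (auto simp: le_less)
  qed (use Suc.prems in auto)
  then show ?case using Suc by (simp only: sigma.simps below)
qed

declare sigma.simps(2) [simp del]

lemma sigma_enumerates:
  shows sigma_strict_antimono: "\<And>i j. i < j \<Longrightarrow> j \<le> ones n r \<Longrightarrow> sigma n r j < sigma n r i"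
    and sigma_image: "sigma n r ` {1..ones n r} = {i \<in> {1..n}. r i}"
proof -
  define xs where "xs = sorted_list_of_set {i \<in> {1..n}. r i}"
  define k where "k = ones n r"
  have xs: "sorted_wrt (<) xs" "set xs = {i \<in> {1..n}. r i}" "length xs = k"
    by (simp_all add: xs_def k_def ones_def)
  define f where "f j = (if j = 0 then n + 1 else xs ! (k - j))" for j
  have f_dec: "f j < f i" if "i < j" "j \<le> k" for i j
  proof (cases "i = 0")
    case True
    have "xs ! (k - j) \<in> set xs" using that xs(3) by auto
    then show ?thesis using True that xs(2) by (auto simp: f_def)
  next
    case False
    then show ?thesis using that xs sorted_wrt_nth_less[OF xs(1), of "k - j" "k - i"] by (auto simp: f_def)
  qed
  have "f ` {1..k} = (\<lambda>j. xs ! (k - j)) ` {1..k}" by (auto simp: f_def)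
  also have "\<dots> = (!) xs ` {..<k}"
    by (metis image_image image_minus_atLeastAtMost)
  also have "\<dots> = set xs" using xs(3) by (auto simp: set_conv_nth)
  finally have f_image: "f ` {1..k} = {i \<in> {1..n}. r i}" using xs(2) by simp
  have sigma_f: "sigma n r j = f j" if "j \<le> k" for j
    by (rule sigma_eqI[OF f_dec _ f_image that]) (simp_all add: f_def)
  show "\<And>i j. i < j \<Longrightarrow> j \<le> ones n r \<Longrightarrow> sigma n r j < sigma n r i"
    using f_dec sigma_f by (simp add: k_def)
  show "sigma n r ` {1..ones n r} = {i \<in> {1..n}. r i}"
    using f_image sigma_f by (simp add: k_def)
qed

lemma inj_on_sigma: "inj_on (sigma n r) {0..ones n r}"
  by (rule inj_onI) (metis atLeastAtMost_iff linorder_neqE_nat sigma_strict_antimono order.irrefl)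

lemma sigma_le: "j \<le> ones n r \<Longrightarrow> sigma n r j \<le> n + 1"
  using sigma_strict_antimono[of 0 j n r] by (cases j) auto

lemma sigma_ones:
  assumes "r 1" "1 \<le> n"
  shows "sigma n r (ones n r) = 1"
proof -
  have "1 \<in> sigma n r ` {1..ones n r}" by (subst sigma_image) (use assms in auto)
  then obtain j where j: "j \<in> {1..ones n r}" "sigma n r j = 1" by auto
  have "sigma n r (ones n r) \<in> {1..n}" using j sigma_image[of n r] by auto
  then show ?thesis using j sigma_strict_antimono[of j "ones n r" n r] by (cases "j = ones n r") auto
qed

lemma ones_eq_Suc_card_inner:
  assumes "r 1" "1 \<le> n"
  shows "ones n r = Suc (card {t \<in> {2..n}. r t})"
proof -
  have "{i \<in> {1..n}. r i} = insert 1 {t \<in> {2..n}. r t}" using assms by auto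
  then show ?thesis by (simp add: ones_def)
qed

lemma sigma_image_inner:
  assumes "r 1" "1 \<le> n"
  shows "sigma n r ` {1..ones n r - 1} = {t \<in> {2..n}. r t}"
proof -
  have "ones n r \<noteq> 0" using assms sigma_image[of n r] by force
  then have "{1..ones n r} = insert (ones n r) {1..ones n r - 1}" by auto
  moreover have "sigma n r (ones n r) \<notin> sigma n r ` {1..ones n r - 1}"
  proof
    assume "sigma n r (ones n r) \<in> sigma n r ` {1..ones n r - 1}"
    then obtain j where j: "j \<in> {1..ones n r - 1}" "sigma n r (ones n r) = sigma n r j" by auto
    then have "j < ones n r" using \<open>ones n r \<noteq> 0\<close> by auto
    then show False using sigma_strict_antimono[of j "ones n r" n r] j(2) by simp
  qed
  ultimately have "sigma n r ` {1..ones n r - 1} = sigma n r ` {1..ones n r} - {1}"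
    using sigma_ones[of r n] assms by auto
  also have "\<dots> = {t \<in> {2..n}. r t}" by (subst sigma_image) auto
  finally show ?thesis .
qed

lemma prod_inner_sigma:
  assumes "r 1" "1 \<le> n"
  shows "prod h {t \<in> {2..n}. r t} = (\<Prod>j = 1..ones n r - 1. h (sigma n r j))"
proof -
  have "inj_on (sigma n r) {1..ones n r - 1}" by (rule inj_on_subset[OF inj_on_sigma]) auto
  then have "prod h (sigma n r ` {1..ones n r - 1}) = (\<Prod>j = 1..ones n r - 1. h (sigma n r j))"
    by (simp add: prod.reindex)
  then show ?thesis using sigma_image_inner[of r n] assms by simp
qed

lemma sigma_Delta_range:
  assumes "r \<in> Delta n" "j \<in> {1..ones n r - 1}"
  shows "sigma n r j \<in> {3..n - 1}"
proof -
  have "sigma n r j \<in> {t \<in> {2..n}. r t}"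
    using sigma_image_inner[of r n] Delta_1[OF assms(1)] Delta_ge_2[OF assms(1)] assms(2) by auto
  then show ?thesis using Delta_2[OF assms(1)] Delta_n[OF assms(1)] by (auto simp: le_less)
qed

section \<open>Reflection of positions\<close>

definition reflect :: "nat \<Rightarrow> (nat \<Rightarrow> bool) \<Rightarrow> nat \<Rightarrow> bool" where
  "reflect n r i \<longleftrightarrow> i = 1 \<or> (2 \<le> i \<and> i \<le> n \<and> r (n + 2 - i))"

lemma reflect_1: "reflect n r 1"
  by (simp add: reflect_def)

lemma reflect_Delta:
  assumes "r \<in> Delta n"
  shows "reflect n r \<in> Delta n"
proof -
  have "\<not> (reflect n r i \<and> reflect n r (i - 1))" if i: "i \<in> {2..n}" for i
  proof (cases "i = 2")
    case True
    then show ?thesis using Delta_n[OF assms] by (simp add: reflect_def)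
  next
    case False
    then have "n + 2 - (i - 1) = Suc (n + 2 - i)" using i by auto
    then show ?thesis using Delta_no_adjacent[OF assms, of "n + 2 - i"] False by (auto simp: reflect_def)
  qed
  moreover have "\<not> reflect n r n" using Delta_2[OF assms] Delta_ge_2[OF assms] by (simp add: reflect_def)
  ultimately show ?thesis using Delta_ge_2[OF assms] by (auto simp: Delta_def reflect_def)
qed

lemma reflect_reflect:
  assumes "r \<in> Delta n"
  shows "reflect n (reflect n r) = r"
proof
  fix i
  show "reflect n (reflect n r) i = r i"
    using Delta_support[OF assms, of i] Delta_1[OF assms] by (auto simp: reflect_def)
qed

lemma inj_on_reflect: "inj_on (reflect n) (Delta n)"
  by (rule inj_onI) (metis reflect_reflect)

lemma inner_reflect: "{t \<in> {2..n}. reflect n r t} = (\<lambda>t. n + 2 - t) ` {t \<in> {2..n}. r t}"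
proof (intro set_eqI iffI)
  fix t assume "t \<in> {t \<in> {2..n}. reflect n r t}"
  then have "n + 2 - t \<in> {t \<in> {2..n}. r t}" "t = n + 2 - (n + 2 - t)" by (auto simp: reflect_def)
  then show "t \<in> (\<lambda>t. n + 2 - t) ` {t \<in> {2..n}. r t}" by (rule rev_image_eqI)
qed (auto simp: reflect_def)

lemma inj_on_reflect_index: "inj_on (\<lambda>t. n + 2 - t) {t \<in> {2..(n::nat)}. r t}"
  by (rule inj_onI) auto

lemma prod_inner_reflect:
  "prod g {t \<in> {2..n}. reflect n r t} = prod (\<lambda>t. g (n + 2 - t)) {t \<in> {2..n}. r t}"
  unfolding inner_reflect prod.reindex[OF inj_on_reflect_index] comp_def ..

lemma ones_reflect:
  assumes "r 1" "1 \<le> n"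
  shows "ones n (reflect n r) = ones n r"
proof -
  have "ones n (reflect n r) = Suc (card {t \<in> {2..n}. reflect n r t})"
    using ones_eq_Suc_card_inner[of "reflect n r" n] reflect_1 assms(2) by blast
  also have "\<dots> = ones n r"
    unfolding inner_reflect card_image[OF inj_on_reflect_index]
    using ones_eq_Suc_card_inner[of r n] assms by simp
  finally show ?thesis .
qed

lemma sigma_reflect:
  assumes "r 1" "1 \<le> n" "j \<le> ones n r"
  shows "sigma n (reflect n r) j = n + 2 - sigma n r (ones n r - j)"
proof -
  define k where "k = ones n r"
  have "k \<noteq> 0" using ones_eq_Suc_card_inner[of r n] assms by (simp add: k_def)
  have "(\<lambda>j. n + 2 - sigma n r (k - j)) ` {1..k} = (\<lambda>t. n + 2 - t) ` sigma n r ` {..<k}"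
    by (simp add: image_minus_atLeastAtMost[symmetric] image_image)
  also have "{..<k} = insert 0 {1..k - 1}" using \<open>k \<noteq> 0\<close> by auto
  also have "(\<lambda>t. n + 2 - t) ` sigma n r ` insert 0 {1..k - 1}
      = insert 1 ((\<lambda>t. n + 2 - t) ` {t \<in> {2..n}. r t})"
    using sigma_image_inner[of r n] assms by (simp add: k_def)
  also have "\<dots> = insert 1 {t \<in> {2..n}. reflect n r t}" by (simp only: inner_reflect)
  also have "\<dots> = {i \<in> {1..n}. reflect n r i}" using assms(2) by (auto simp: reflect_def)
  finally have img: "(\<lambda>j. n + 2 - sigma n r (k - j)) ` {1..k} = {i \<in> {1..n}. reflect n r i}" .
  have dec: "n + 2 - sigma n r (k - j') < n + 2 - sigma n r (k - i)" if "i < j'" "j' \<le> k" for i j'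
  proof -
    have "sigma n r (k - i) < sigma n r (k - j')"
      using sigma_strict_antimono[of "k - j'" "k - i" n r] that by (simp add: k_def)
    then show ?thesis using sigma_le[of "k - j'" n r] by (simp add: k_def)
  qed
  show ?thesis
    unfolding k_def[symmetric]
    by (rule sigma_eqI[OF dec _ img]) (use sigma_ones[of r n] assms in \<open>simp_all add: k_def\<close>)
qed

definition gap :: "nat \<Rightarrow> (nat \<Rightarrow> bool) \<Rightarrow> nat \<Rightarrow> nat" where
  "gap n r l = sigma n r (l - 1) - sigma n r l"

lemma Lambda1_gap: "Lambda1 n = {r \<in> Delta n. \<forall>l \<in> {1..ones n r - 1}. gap n r l \<le> gap n r (Suc l)}"
  by (simp add: Lambda1_def gap_def)

lemma Lambda2_gap: "Lambda2 n = {r \<in> Delta n. \<forall>l \<in> {1..ones n r - 1}. gap n r (Suc l) \<le> gap n r l}"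
  by (simp add: Lambda2_def gap_def)

lemma gap_reflect:
  assumes "r 1" "1 \<le> n" "l \<in> {1..ones n r}"
  shows "gap n (reflect n r) l = gap n r (Suc (ones n r - l))"
proof -
  define k where "k = ones n r"
  have "sigma n r (Suc (k - l)) < sigma n r (k - l)" "sigma n r (k - l) \<le> n + 1"
    using sigma_strict_antimono[of "k - l" "Suc (k - l)" n r] sigma_le[of "k - l" n r] assms(3)
    by (auto simp: k_def)
  moreover have "k - (l - 1) = Suc (k - l)" using assms(3) by (auto simp: k_def)
  ultimately show ?thesis
    using sigma_reflect[of r n l] sigma_reflect[of r n "l - 1"] assms by (simp add: gap_def k_def)
qed

lemma ball_atLeastAtMost_reverse: "(\<forall>l\<in>{1..k - 1}. P (k - l)) \<longleftrightarrow> (\<forall>m\<in>{1..(k::nat) - 1}. P m)"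
proof
  assume H: "\<forall>l\<in>{1..k - 1}. P (k - l)"
  show "\<forall>m\<in>{1..k - 1}. P m"
  proof
    fix m assume "m \<in> {1..k - 1}"
    then have "k - m \<in> {1..k - 1}" "k - (k - m) = m" by auto
    then show "P m" using H by metis
  qed
next
  assume H: "\<forall>m\<in>{1..k - 1}. P m"
  show "\<forall>l\<in>{1..k - 1}. P (k - l)"
  proof
    fix l assume "l \<in> {1..k - 1}"
    then have "k - l \<in> {1..k - 1}" by auto
    then show "P (k - l)" using H by blast
  qed
qed

lemma reflect_in_Lambda2_iff:
  assumes "r \<in> Delta n"
  shows "reflect n r \<in> Lambda2 n \<longleftrightarrow> r \<in> Lambda1 n"
proof -
  define k where "k = ones n r"
  have r1: "r 1" and n1: "1 \<le> n" using Delta_1[OF assms] Delta_ge_2[OF assms] by auto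
  have gaps: "gap n (reflect n r) (Suc l) \<le> gap n (reflect n r) l \<longleftrightarrow> gap n r (k - l) \<le> gap n r (Suc (k - l))"
    if "l \<in> {1..k - 1}" for l
  proof -
    have "Suc (k - Suc l) = k - l" using that by auto
    then show ?thesis using gap_reflect[of r n l] gap_reflect[of r n "Suc l"] r1 n1 that
      by (auto simp: k_def)
  qed
  have "reflect n r \<in> Lambda2 n \<longleftrightarrow> (\<forall>l\<in>{1..k - 1}. gap n r (k - l) \<le> gap n r (Suc (k - l)))"
    using gaps reflect_Delta[OF assms] ones_reflect[of r n] r1 n1 by (auto simp: Lambda2_gap k_def)
  also have "\<dots> \<longleftrightarrow> r \<in> Lambda1 n"
    unfolding ball_atLeastAtMost_reverse[where P = "\<lambda>m. gap n r m \<le> gap n r (Suc m)"]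
    using assms by (simp add: Lambda1_gap k_def)
  finally show ?thesis .
qed

lemma reflect_Lambda1: "reflect n ` Lambda1 n = Lambda2 n"
proof
  show "reflect n ` Lambda1 n \<subseteq> Lambda2 n"
    using reflect_in_Lambda2_iff by (auto simp: Lambda1_def)
  show "Lambda2 n \<subseteq> reflect n ` Lambda1 n"
  proof
    fix r assume r: "r \<in> Lambda2 n"
    then have D: "r \<in> Delta n" by (simp add: Lambda2_def)
    then have "reflect n r \<in> Lambda1 n"
      using reflect_in_Lambda2_iff[OF reflect_Delta[OF D]] r by (simp add: reflect_reflect)
    then show "r \<in> reflect n ` Lambda1 n" using reflect_reflect[OF D] by (metis image_eqI)
  qed
qed

lemma prob_Lambda2_eq_sum_reflect:
  "measure_pmf.prob M (Lambda2 n) = (\<Sum>r\<in>Lambda1 n. pmf M (reflect n r))"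
proof -
  have "finite (Lambda2 n)" by (rule finite_subset[OF _ finite_Delta]) (auto simp: Lambda2_def)
  then have "measure_pmf.prob M (Lambda2 n) = sum (pmf M) (reflect n ` Lambda1 n)"
    by (simp add: measure_measure_pmf_finite reflect_Lambda1)
  also have "\<dots> = (\<Sum>r\<in>Lambda1 n. pmf M (reflect n r))"
    using inj_on_subset[OF inj_on_reflect Lambda1_subset_Delta] by (simp add: sum.reindex)
  finally show ?thesis .
qed

section \<open>Comparison of product weights\<close>

lemma concave_sum_endpoints_le:
  fixes f :: "nat \<Rightarrow> int"
  assumes concave: "\<And>l. 0 < l \<Longrightarrow> l < k \<Longrightarrow> f (l - 1) + f (Suc l) \<le> 2 * f l"
    and "j \<le> k"
  shows "f 0 + f k \<le> f j + f (k - j)"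
proof -
  define e where "e l = f l - f (Suc l)" for l
  have e_mono: "e a \<le> e b" if "a \<le> b" "b < k" for a b
    using that
  proof (induction b rule: dec_induct)
    case (step m)
    then show ?case using concave[of "Suc m"] by (simp add: e_def)
  qed simp
  have "f 0 - f j = (\<Sum>l<j. e l)" by (simp add: e_def sum_lessThan_telescope')
  also have "\<dots> \<le> (\<Sum>l<j. e (l + (k - j)))"
    by (rule sum_mono) (use e_mono assms(2) in auto)
  also have "\<dots> = f (k - j) - f k"
    using sum_lessThan_telescope'[of "\<lambda>l. f (l + (k - j))" j] assms(2) by (simp add: e_def)
  finally show ?thesis by simp
qed

lemma Lambda1_sigma_sum_ge:
  assumes "r \<in> Lambda1 n" "j \<le> ones n r"
  shows "n + 2 \<le> sigma n r j + sigma n r (ones n r - j)"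
proof -
  define k where "k = ones n r"
  have D: "r \<in> Delta n" using assms(1) by (simp add: Lambda1_def)
  have "int (sigma n r (l - 1)) + int (sigma n r (Suc l)) \<le> 2 * int (sigma n r l)"
    if "0 < l" "l < k" for l
  proof -
    have "sigma n r (l - 1) - sigma n r l \<le> sigma n r l - sigma n r (Suc l)"
      using assms(1) that by (auto simp: Lambda1_def k_def)
    moreover have "sigma n r l < sigma n r (l - 1)" "sigma n r (Suc l) < sigma n r l"
      using sigma_strict_antimono[of "l - 1" l n r] sigma_strict_antimono[of l "Suc l" n r] that
      by (auto simp: k_def)
    ultimately show ?thesis by linarith
  qed
  then have "int (sigma n r 0) + int (sigma n r k) \<le> int (sigma n r j) + int (sigma n r (k - j))"
    using concave_sum_endpoints_le[of k "\<lambda>l. int (sigma n r l)" j] assms(2) by (simp add: k_def)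
  then show ?thesis using sigma_ones[of r n] Delta_1[OF D] Delta_ge_2[OF D] by (simp add: k_def)
qed

lemma prod_inner_le_reflect:
  fixes g :: "nat \<Rightarrow> 'a :: linordered_semidom"
  assumes L: "r \<in> Lambda1 n"
    and g_nonneg: "\<And>t. t \<in> {3..n - 1} \<Longrightarrow> 0 \<le> g t"
    and g_antimono: "\<And>x y. 3 \<le> x \<Longrightarrow> x \<le> y \<Longrightarrow> y \<le> n - 1 \<Longrightarrow> g y \<le> g x"
  shows "prod g {t \<in> {2..n}. r t} \<le> prod g {t \<in> {2..n}. reflect n r t}"
proof -
  define k where "k = ones n r"
  have D: "r \<in> Delta n" using L by (simp add: Lambda1_def)
  have r1: "r 1" and n1: "1 \<le> n" using Delta_1[OF D] Delta_ge_2[OF D] by auto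
  have "prod g {t \<in> {2..n}. r t} = (\<Prod>j = 1..k - 1. g (sigma n r j))"
    using prod_inner_sigma[of r n] r1 n1 by (simp add: k_def)
  also have "\<dots> \<le> (\<Prod>j = 1..k - 1. g (n + 2 - sigma n r (k - j)))"
  proof (rule prod_mono)
    fix j assume j: "j \<in> {1..k - 1}"
    have "k - j \<in> {1..k - 1}" using j by auto
    then have "sigma n r j \<in> {3..n - 1}" "sigma n r (k - j) \<in> {3..n - 1}"
      using sigma_Delta_range[OF D, of j] sigma_Delta_range[OF D, of "k - j"] j by (simp_all add: k_def)
    moreover have "j \<le> k" using j by auto
    then have "n + 2 \<le> sigma n r j + sigma n r (k - j)"
      using Lambda1_sigma_sum_ge[OF L, of j] by (simp add: k_def)
    ultimately show "0 \<le> g (sigma n r j) \<and> g (sigma n r j) \<le> g (n + 2 - sigma n r (k - j))"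
      using g_nonneg g_antimono[of "n + 2 - sigma n r (k - j)" "sigma n r j"] by auto
  qed
  also have "\<dots> = (\<Prod>j = 1..k - 1. g (sigma n (reflect n r) j))"
    by (rule prod.cong) (use sigma_reflect[of r n] r1 n1 in \<open>auto simp: k_def\<close>)
  also have "\<dots> = prod g {t \<in> {2..n}. reflect n r t}"
    using prod_inner_sigma[of "reflect n r" n g] ones_reflect[of r n] reflect_1[of n r] r1 n1
    by (simp add: k_def)
  finally show ?thesis .
qed

(* cycle lengths 2 and n - 2 *)
lemma Lambda1_witness:
  assumes "5 \<le> n"
  shows "(\<lambda>i. i = 1 \<or> i = n - 1) \<in> Lambda1 n"
proof -
  define w where "w = (\<lambda>i::nat. i = 1 \<or> i = n - 1)"
  have D: "w \<in> Delta n" using assms by (auto simp: Delta_def w_def)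
  have inner: "{t \<in> {2..n}. w t} = {n - 1}" using assms by (auto simp: w_def)
  have "ones n w = Suc (card {t \<in> {2..n}. w t})"
    by (rule ones_eq_Suc_card_inner) (use assms in \<open>simp_all add: w_def\<close>)
  then have k: "ones n w = 2" unfolding inner by simp
  have "sigma n w ` {1..1} = {n - 1}"
    using sigma_image_inner[of w n] Delta_1[OF D] assms unfolding k inner by simp
  then have "sigma n w 1 = n - 1" by simp
  moreover have "sigma n w 2 = 1" using sigma_ones[of w n] Delta_1[OF D] assms by (simp add: k)
  ultimately have "w \<in> Lambda1 n" using D k assms by (simp add: Lambda1_gap gap_def numeral_2_eq_2)
  then show ?thesis by (simp only: w_def)
qed

lemma prob_Lambda1_less_Lambda2:
  fixes M :: "(nat \<Rightarrow> bool) pmf" and g :: "nat \<Rightarrow> real"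
  assumes n: "5 \<le> n" and K: "0 < K"
    and pmf_M: "\<And>r. r \<in> Delta n \<Longrightarrow> pmf M r = K * prod g {t \<in> {2..n}. r t}"
    and g_nonneg: "\<And>t. t \<in> {3..n - 1} \<Longrightarrow> 0 \<le> g t"
    and g_decreasing: "\<And>x y. 3 \<le> x \<Longrightarrow> x < y \<Longrightarrow> y \<le> n - 1 \<Longrightarrow> g y < g x"
  shows "measure_pmf.prob M (Lambda1 n) < measure_pmf.prob M (Lambda2 n)"
proof -
  have Lambda1_D: "r \<in> Delta n" if "r \<in> Lambda1 n" for r
    using that Lambda1_subset_Delta by blast
  have le: "pmf M r \<le> pmf M (reflect n r)" if "r \<in> Lambda1 n" for r
    using prod_inner_le_reflect[OF that, of g] g_nonneg g_decreasing
      pmf_M[OF Lambda1_D[OF that]] pmf_M[OF reflect_Delta[OF Lambda1_D[OF that]]] K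
    by (force simp: le_less)
  define w where "w = (\<lambda>i::nat. i = 1 \<or> i = n - 1)"
  have w: "w \<in> Lambda1 n" unfolding w_def by (rule Lambda1_witness[OF n])
  have w_inner: "{t \<in> {2..n}. w t} = {n - 1}" using n by (auto simp: w_def)
  have "{t \<in> {2..n}. reflect n w t} = {3}"
    unfolding inner_reflect w_inner using n by simp
  then have "pmf M w < pmf M (reflect n w)"
    using pmf_M[OF Lambda1_D[OF w]] pmf_M[OF reflect_Delta[OF Lambda1_D[OF w]]]
      g_decreasing[of 3 "n - 1"] n K w_inner by simp
  then have "0 < (\<Sum>r\<in>Lambda1 n. pmf M (reflect n r) - pmf M r)"
    using le by (intro sum_pos2[OF finite_subset[OF Lambda1_subset_Delta finite_Delta] w]) auto
  also have "\<dots> = measure_pmf.prob M (Lambda2 n) - measure_pmf.prob M (Lambda1 n)"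
    using finite_subset[OF Lambda1_subset_Delta finite_Delta]
    by (simp add: prob_Lambda2_eq_sum_reflect sum_subtractf measure_measure_pmf_finite)
  finally show ?thesis by simp
qed

section \<open>The Markov chain of part (a)\<close>

lemma ychain_support: "x \<in> set_pmf (ychain p m s) \<Longrightarrow> x i \<Longrightarrow> i \<in> {1..m + 2}"
  by (induction m arbitrary: s x) (fastforce split: if_splits)+

(* From state 1 the next value is 0 for sure: after a one the chain restarts one position lower. *)
lemma ychain_Suc_True: "ychain p (Suc m) True = ychain p m False"
proof -
  have "ychain p (Suc m) True = map_pmf (\<lambda>x. x(m + 3 := False)) (ychain p m False)"
    by (simp add: bind_return_pmf)
  also have "\<dots> = ychain p m False"
    by (rule map_pmf_idI) (auto simp: fun_eq_iff dest: ychain_support)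
  finally show ?thesis .
qed

lemma pmf_map_fun_upd:
  "pmf (map_pmf (\<lambda>x. x(k := b)) M) r =
     (if r k = b then pmf M (r(k := False)) + pmf M (r(k := True)) else 0)"
proof -
  have "(\<lambda>x. x(k := b)) -` {r} = (if r k = b then {r(k := False), r(k := True)} else {})"
    by (auto simp: fun_eq_iff split: if_splits)
  moreover have "r(k := False) \<noteq> r(k := True)" by (auto simp: fun_eq_iff)
  ultimately show ?thesis by (auto simp: pmf_map measure_measure_pmf_finite)
qed

lemma pmf_ychain_Suc_Suc:
  assumes "0 \<le> p (m + 3)" "p (m + 3) \<le> 1"
  shows "pmf (ychain p (Suc (Suc m)) True) r =
    (if r (m + 3) then (1 - p (m + 3)) * pmf (ychain p m True) (r(m + 3 := False))
     else p (m + 3) * pmf (ychain p (Suc m) True) r)"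
proof -
  have out: "pmf (ychain p m b) (r(m + 3 := True)) = 0" for b
    using ychain_support[of "r(m + 3 := True)" p m b "m + 3"] by (auto simp: set_pmf_iff)
  have "pmf (ychain p (Suc (Suc m)) True) r = pmf (ychain p (Suc m) False) r"
    by (simp only: ychain_Suc_True)
  also have "\<dots> = (1 - p (m + 3)) * (if r (m + 3) then pmf (ychain p m True) (r(m + 3 := False)) else 0)
      + p (m + 3) * (if r (m + 3) then 0 else pmf (ychain p m False) (r(m + 3 := False)))"
    using assms by (simp add: pmf_bind pmf_map_fun_upd out)
  also have "pmf (ychain p m False) (r(m + 3 := False)) = pmf (ychain p (Suc m) True) (r(m + 3 := False))"
    by (simp only: ychain_Suc_True)
  finally show ?thesis by (auto simp: fun_upd_idem)
qed

declare ychain.simps(2) [simp del]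

(* the paper's convention p_2 := 1 *)
definition p_ext :: "(nat \<Rightarrow> real) \<Rightarrow> nat \<Rightarrow> real" where
  "p_ext p i = (if i = 2 then 1 else p i)"

(* A one at t turns the factor p_t into q_t and makes the next value 0 for sure, which
   removes the factor p_(t-1). *)
definition yweight :: "(nat \<Rightarrow> real) \<Rightarrow> nat \<Rightarrow> real" where
  "yweight p t = (1 - p t) / (p t * p_ext p (t - 1))"

definition ychain_weight :: "(nat \<Rightarrow> real) \<Rightarrow> nat \<Rightarrow> (nat \<Rightarrow> bool) \<Rightarrow> real" where
  "ychain_weight p N r = (\<Prod>i\<in>{3..N}. p i) / p_ext p N * prod (yweight p) {t \<in> {2..N}. r t}"

lemma ychain_weight_Suc_zero:
  assumes "\<not> r (Suc N)" "3 \<le> N" "p N \<noteq> 0" "p (Suc N) \<noteq> 0"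
  shows "ychain_weight p (Suc N) r = p N * ychain_weight p N r"
proof -
  have "{t \<in> {2..Suc N}. r t} = {t \<in> {2..N}. r t}" using assms(1) by (auto simp: le_Suc_eq)
  moreover have "{3..Suc N} = insert (Suc N) {3..N}" using assms(2) by auto
  ultimately show ?thesis using assms(2-4) by (simp add: ychain_weight_def p_ext_def)
qed

lemma ychain_weight_Suc_Suc_one:
  assumes "r (Suc N)" "\<not> r (Suc (Suc N))" "2 \<le> N"
    and "p (Suc N) \<noteq> 0" "p (Suc (Suc N)) \<noteq> 0" "p_ext p N \<noteq> 0"
  shows "ychain_weight p (Suc (Suc N)) r = (1 - p (Suc N)) * ychain_weight p N (r(Suc N := False))"
proof -
  have "{t \<in> {2..Suc (Suc N)}. r t} = insert (Suc N) {t \<in> {2..N}. (r(Suc N := False)) t}"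
    using assms(1-3) by (auto simp: le_Suc_eq)
  then have prod_y: "prod (yweight p) {t \<in> {2..Suc (Suc N)}. r t}
      = (1 - p (Suc N)) / (p (Suc N) * p_ext p N) * prod (yweight p) {t \<in> {2..N}. (r(Suc N := False)) t}"
    by (simp add: yweight_def)
  have "{3..Suc (Suc N)} = insert (Suc (Suc N)) (insert (Suc N) {3..N})" using assms(3) by auto
  then have prod_p: "(\<Prod>i\<in>{3..Suc (Suc N)}. p i) = p (Suc (Suc N)) * p (Suc N) * (\<Prod>i\<in>{3..N}. p i)"
    by simp
  have "p_ext p (Suc (Suc N)) = p (Suc (Suc N))" using assms(3) by (simp add: p_ext_def)
  then show ?thesis unfolding ychain_weight_def prod_y prod_p using assms(4-6) by (simp add: field_simps)
qed

lemma pmf_ychain: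
  assumes "\<forall>i\<in>{3..m + 2}. 0 < p i \<and> p i < 1" "r \<in> Delta (m + 2)"
  shows "pmf (ychain p m True) r = ychain_weight p (m + 2) r"
  using assms
proof (induction m arbitrary: r rule: induct_nat_012)
  case 0
  have r: "r = (\<lambda>i. i = 1)" using Delta_le_3[OF 0(2)] by simp
  then have empty: "{t \<in> {2..0 + 2}. r t} = {}" by auto
  have "ychain_weight p (0 + 2) r = 1" unfolding ychain_weight_def empty by (simp add: p_ext_def)
  then show ?case using r by simp
next
  case 1
  have r: "r = (\<lambda>i. i = 1)" using Delta_le_3[OF 1(2)] by simp
  then have empty: "{t \<in> {2..Suc 0 + 2}. r t} = {}" by auto
  have "ychain_weight p (Suc 0 + 2) r = 1"
    unfolding ychain_weight_def empty using 1(1) by (simp add: p_ext_def numeral_3_eq_3)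
  then show ?case using r by (simp add: ychain_Suc_True)
next
  case (ge2 m)
  define q where "q = m + 3"
  have p: "0 < p i" "p i < 1" if "i \<in> {3..m + 4}" for i using ge2.prems(1) that by auto
  have p_m: "\<forall>i\<in>{3..m + 2}. 0 < p i \<and> p i < 1"
    and p_Suc: "\<forall>i\<in>{3..Suc m + 2}. 0 < p i \<and> p i < 1"
    using ge2.prems(1) by auto
  have "0 < p_ext p (m + 2)" using p_m by (auto simp: p_ext_def)
  moreover have "\<not> r (Suc q)" using Delta_n[OF ge2.prems(2)] by (simp add: q_def eval_nat_numeral)
  moreover have "pmf (ychain p (Suc (Suc m)) True) r =
    (if r q then (1 - p q) * pmf (ychain p m True) (r(q := False))
     else p q * pmf (ychain p (Suc m) True) r)"
    using pmf_ychain_Suc_Suc[of p m r] p[of q] by (simp add: q_def)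
  moreover have "r \<in> Delta (Suc m + 2)" if "\<not> r q"
    using Delta_Suc_drop_last[of r q] ge2.prems(2) that by (simp add: q_def eval_nat_numeral)
  moreover have "r(q := False) \<in> Delta (m + 2)" if "r q"
    using Delta_Suc_Suc_drop_one[of r "m + 2"] ge2.prems(2) that by (simp add: q_def eval_nat_numeral)
  ultimately show ?case
    using ge2.IH(1)[OF p_m] ge2.IH(2)[OF p_Suc] p[of q] p[of "Suc q"]
      ychain_weight_Suc_zero[of r q p] ychain_weight_Suc_Suc_one[of r "m + 2" p]
    by (auto simp: q_def eval_nat_numeral)
qed

lemma pmf_Ylaw:
  assumes "\<forall>i\<in>{3..n}. 0 < p i \<and> p i < 1" "r \<in> Delta n"
  shows "pmf (Ylaw p n) r = (\<Prod>i\<in>{3..n}. p i) / p_ext p n * prod (yweight p) {t \<in> {2..n}. r t}"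
proof -
  have "n - 2 + 2 = n" using Delta_ge_2[OF assms(2)] by simp
  then show ?thesis using pmf_ychain[of "n - 2" p r] assms by (simp add: Ylaw_def ychain_weight_def)
qed

lemma yweight_pos:
  assumes "\<forall>i\<in>{3..n}. 0 < p i \<and> p i < 1" "t \<in> {3..n}"
  shows "0 < yweight p t"
proof -
  have "t - 1 = 2 \<or> t - 1 \<in> {3..n}" using assms(2) by auto
  then have "0 < p_ext p (t - 1)" using assms(1) by (auto simp: p_ext_def)
  then show ?thesis using assms by (simp add: yweight_def)
qed

lemma yweight_less:
  assumes p: "\<forall>i\<in>{3..n}. 0 < p i \<and> p i < 1" and i: "i \<in> {4..n}"
    and ratio: "1 < p i * (1 - p (i - 1)) / (p_ext p (i - 2) * (1 - p i))"
  shows "yweight p i < yweight p (i - 1)"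
proof -
  define a b c where "a = p i" and "b = p (i - 1)" and "c = p_ext p (i - 2)"
  have "i \<in> {3..n}" "i - 1 \<in> {3..n}" using i by auto
  then have a: "0 < a" "a < 1" and b: "0 < b" "b < 1" using p by (auto simp: a_def b_def)
  have "i - 2 = 2 \<or> i - 2 \<in> {3..n}" using i by auto
  then have c: "0 < c" using p by (auto simp: c_def p_ext_def)
  have "c * (1 - a) < a * (1 - b)" using ratio a c by (simp add: a_def b_def c_def less_divide_eq)
  then have "c * (1 - a) * b < a * (1 - b) * b" using b by simp
  then have "(1 - a) * (b * c) < (1 - b) * (a * b)" by (simp add: algebra_simps)
  then have "(1 - a) / (a * b) < (1 - b) / (b * c)" using a b c by (simp add: frac_less_eq field_simps)
  moreover have "i - 1 \<noteq> 2" using i by auto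
  then have "yweight p i = (1 - a) / (a * b)" by (simp add: yweight_def a_def b_def p_ext_def)
  moreover have "i - 1 - 1 = i - 2" by simp
  then have "yweight p (i - 1) = (1 - b) / (b * c)" by (simp only: yweight_def b_def c_def)
  ultimately show ?thesis by simp
qed

theorem prob_Ylaw_Lambda1_less_Lambda2:
  assumes n: "5 \<le> n" and p: "\<forall>i\<in>{3..n}. 0 < p i \<and> p i < 1"
    and ratio: "\<forall>i\<in>{4..n - 1}. p i * (1 - p (i - 1)) / ((if i - 2 = 2 then 1 else p (i - 2)) * (1 - p i)) > 1"
  shows "measure_pmf.prob (Ylaw p n) (Lambda1 n) < measure_pmf.prob (Ylaw p n) (Lambda2 n)"
proof (rule prob_Lambda1_less_Lambda2[OF n])
  show "0 < (\<Prod>i\<in>{3..n}. p i) / p_ext p n"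
    using p p[rule_format, of n] n by (auto intro!: divide_pos_pos prod_pos simp: p_ext_def)
  show "pmf (Ylaw p n) r = (\<Prod>i\<in>{3..n}. p i) / p_ext p n * prod (yweight p) {t \<in> {2..n}. r t}"
    if "r \<in> Delta n" for r
    using pmf_Ylaw[OF p that] .
  show "0 \<le> yweight p t" if "t \<in> {3..n - 1}" for t
  proof -
    have "t \<in> {3..n}" using that by auto
    then show ?thesis using yweight_pos[OF p] less_imp_le by blast
  qed
  have "yweight p (Suc k) < yweight p k" if "k \<in> {3..n - 2}" for k
  proof -
    have k: "Suc k \<in> {4..n - 1}" using that by auto
    then have "Suc k \<in> {4..n}" by auto
    then have "yweight p (Suc k) < yweight p (Suc k - 1)"
      using yweight_less[OF p] ratio[rule_format, OF k] unfolding p_ext_def by blast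
    then show ?thesis by simp
  qed
  then show "yweight p y < yweight p x" if "3 \<le> x" "x < y" "y \<le> n - 1" for x y
    using lift_Suc_mono_less_ivl[of "{3..n - 2}" "\<lambda>i. - yweight p i" x y] that by force
qed

section \<open>The conditioned Bernoulli vector of part (b)\<close>

lemma prod_if_eq_prod_mult_prod_ratio:
  fixes a b :: "'i \<Rightarrow> 'a :: field"
  assumes "finite A" "\<And>i. i \<in> A \<Longrightarrow> b i \<noteq> 0"
  shows "(\<Prod>i\<in>A. if P i then a i else b i) = prod b A * prod (\<lambda>i. a i / b i) {i \<in> A. P i}"
proof -
  have "(\<Prod>i\<in>A. if P i then a i else b i) = (\<Prod>i\<in>A. b i * (if P i then a i / b i else 1))"
    by (rule prod.cong) (use assms(2) in auto)
  also have "\<dots> = prod b A * prod (\<lambda>i. a i / b i) {i \<in> A. P i}"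
    by (simp add: prod.distrib prod.inter_filter[OF assms(1)])
  finally show ?thesis .
qed

definition xi_const :: "real \<Rightarrow> nat \<Rightarrow> real" where
  "xi_const \<theta> n = (\<Prod>i\<in>{2..n}. (real i - 1) / (\<theta> + real i - 1))"

lemma xi_const_pos: "0 < \<theta> \<Longrightarrow> 0 < xi_const \<theta> n"
  unfolding xi_const_def by (rule prod_pos) auto

lemma pmf_xilaw:
  assumes \<theta>: "0 < \<theta>" and supp: "\<And>i. r i \<Longrightarrow> i \<in> {1..n}" and r1: "r 1"
  shows "pmf (xilaw \<theta> n) r = xi_const \<theta> n * prod (\<lambda>t. \<theta> / (real t - 1)) {t \<in> {2..n}. r t}"
proof -
  define a where "a i = \<theta> / (\<theta> + real i - 1)" for i :: nat
  have a01: "0 \<le> a i" "a i \<le> 1" if "1 \<le> i" for i using that \<theta> by (auto simp: a_def)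
  have "pmf (xilaw \<theta> n) r = (\<Prod>i\<in>{1..n}. pmf (bernoulli_pmf (a i)) (r i))"
    unfolding xilaw_def a_def by (rule pmf_Pi') (use supp in auto)
  also have "\<dots> = (\<Prod>i\<in>{1..n}. if r i then a i else 1 - a i)"
    by (rule prod.cong) (use a01 in auto)
  also have "{1..n} = insert 1 {2..n}" using supp[OF r1] by auto
  also have "(\<Prod>i\<in>insert 1 {2..n}. if r i then a i else 1 - a i)
      = (\<Prod>i\<in>{2..n}. if r i then a i else 1 - a i)"
    using r1 \<theta> by (simp add: a_def)
  also have "\<dots> = (\<Prod>i\<in>{2..n}. 1 - a i) * prod (\<lambda>i. a i / (1 - a i)) {t \<in> {2..n}. r t}"
    by (rule prod_if_eq_prod_mult_prod_ratio) (use \<theta> in \<open>auto simp: a_def divide_eq_1_iff\<close>)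
  also have "(\<Prod>i\<in>{2..n}. 1 - a i) = xi_const \<theta> n"
    unfolding xi_const_def by (rule prod.cong) (use \<theta> in \<open>auto simp: a_def field_simps\<close>)
  also have "prod (\<lambda>i. a i / (1 - a i)) {t \<in> {2..n}. r t} = prod (\<lambda>t. \<theta> / (real t - 1)) {t \<in> {2..n}. r t}"
  proof (rule prod.cong)
    fix t assume "t \<in> {t \<in> {2..n}. r t}"
    then have d: "0 < real t - 1" by auto
    have pos: "0 < \<theta> + real t - 1" using d \<theta> by simp
    then have "1 - a t = (real t - 1) / (\<theta> + real t - 1)" by (simp add: a_def field_simps)
    then show "a t / (1 - a t) = \<theta> / (real t - 1)" using d pos by (simp add: a_def)
  qed simp
  finally show ?thesis .
qed

lemma pmf_etalaw:
  assumes \<theta>: "0 < \<theta>" and n: "2 \<le> n"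
  obtains K where "0 < K"
    and "\<And>r. r \<in> Delta n \<Longrightarrow> pmf (etalaw \<theta> n) r = K * prod (\<lambda>t. \<theta> / (real t - 1)) {t \<in> {2..n}. r t}"
proof -
  let ?M = "xilaw \<theta> n"
  define e where "e = (\<lambda>i::nat. i = 1)"
  have e: "e \<in> Delta n" using n by (auto simp: Delta_def e_def)
  have "pmf ?M e = xi_const \<theta> n * prod (\<lambda>t. \<theta> / (real t - 1)) {t \<in> {2..n}. e t}"
    by (rule pmf_xilaw[OF \<theta>]) (use n in \<open>auto simp: e_def\<close>)
  moreover have "{t \<in> {2..n}. e t} = {}" by (auto simp: e_def)
  ultimately have "pmf ?M e = xi_const \<theta> n" by (simp only: prod.empty mult_1_right)
  then have pmf_e: "0 < pmf ?M e" using xi_const_pos[OF \<theta>] by simp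
  have "pmf ?M e \<le> measure_pmf.prob ?M (Delta n)"
    using member_le_sum[OF e, of "pmf ?M"] finite_Delta by (simp add: measure_measure_pmf_finite)
  then have P: "0 < measure_pmf.prob ?M (Delta n)" using pmf_e by linarith
  have "e \<in> set_pmf ?M" using pmf_e by (simp add: set_pmf_iff)
  then have ne: "set_pmf ?M \<inter> Delta n \<noteq> {}" using e by blast
  show ?thesis
  proof (rule that[of "xi_const \<theta> n / measure_pmf.prob ?M (Delta n)"])
    show "0 < xi_const \<theta> n / measure_pmf.prob ?M (Delta n)" using xi_const_pos[OF \<theta>] P by simp
    show "pmf (etalaw \<theta> n) r = xi_const \<theta> n / measure_pmf.prob ?M (Delta n)
        * prod (\<lambda>t. \<theta> / (real t - 1)) {t \<in> {2..n}. r t}" if "r \<in> Delta n" for r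
      unfolding etalaw_def pmf_cond[OF ne]
      using that pmf_xilaw[OF \<theta>, of r n] Delta_support[OF that] Delta_1[OF that] by simp
  qed
qed

theorem prob_etalaw_Lambda1_less_Lambda2:
  assumes "0 < \<theta>" "5 \<le> n"
  shows "measure_pmf.prob (etalaw \<theta> n) (Lambda1 n) < measure_pmf.prob (etalaw \<theta> n) (Lambda2 n)"
proof -
  obtain K where K: "0 < K"
    and pmf_eta: "\<And>r. r \<in> Delta n \<Longrightarrow> pmf (etalaw \<theta> n) r = K * prod (\<lambda>t. \<theta> / (real t - 1)) {t \<in> {2..n}. r t}"
    using pmf_etalaw[of \<theta> n] assms by auto
  show ?thesis
  proof (rule prob_Lambda1_less_Lambda2[OF assms(2) K pmf_eta])
    show "0 \<le> \<theta> / (real t - 1)" if "t \<in> {3..n - 1}" for t using that assms(1) by auto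
    show "\<theta> / (real y - 1) < \<theta> / (real x - 1)" if "3 \<le> x" "x < y" "y \<le> n - 1" for x y
      using that assms(1) by (simp add: divide_strict_left_mono)
  qed
qed

theorem prob_etalaw_Lambda2_eq:
  assumes \<theta>: "0 < \<theta>" and n: "2 \<le> n"
  shows "measure_pmf.prob (etalaw \<theta> n) (Lambda2 n) =
    (\<Sum>r\<in>Lambda1 n. (\<Prod>i=1..ones n r - 1.
        (real (sigma n r i) - 1) / (real (n + 1) - real (sigma n r i))) * pmf (etalaw \<theta> n) r)"
proof -
  obtain K where pmf_eta: "\<And>r. r \<in> Delta n \<Longrightarrow>
      pmf (etalaw \<theta> n) r = K * prod (\<lambda>t. \<theta> / (real t - 1)) {t \<in> {2..n}. r t}"
    using pmf_etalaw[OF \<theta> n] by auto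
  define h where "h t = (real t - 1) / (real (n + 1) - real t)" for t
  have "pmf (etalaw \<theta> n) (reflect n r) = (\<Prod>i=1..ones n r - 1. h (sigma n r i)) * pmf (etalaw \<theta> n) r"
    if "r \<in> Delta n" for r
  proof -
    have "pmf (etalaw \<theta> n) (reflect n r) = K * prod (\<lambda>t. \<theta> / (real (n + 2 - t) - 1)) {t \<in> {2..n}. r t}"
      using pmf_eta[OF reflect_Delta[OF that]] by (simp only: prod_inner_reflect)
    also have "prod (\<lambda>t. \<theta> / (real (n + 2 - t) - 1)) {t \<in> {2..n}. r t}
        = prod (\<lambda>t. h t * (\<theta> / (real t - 1))) {t \<in> {2..n}. r t}"
      by (rule prod.cong) (auto simp: h_def of_nat_diff)
    also have "\<dots> = prod h {t \<in> {2..n}. r t} * prod (\<lambda>t. \<theta> / (real t - 1)) {t \<in> {2..n}. r t}"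
      by (rule prod.distrib)
    finally show ?thesis
      using pmf_eta[OF that] prod_inner_sigma[of r n h] Delta_1[OF that] n by simp
  qed
  then show ?thesis
    unfolding prob_Lambda2_eq_sum_reflect h_def using Lambda1_subset_Delta by (auto intro: sum.cong)
qed

theorem mainTheorem8:
  fixes n :: nat
  assumes "n \<ge> 5"
  shows
   "(\<forall>p :: nat \<Rightarrow> real.
      (\<forall>i\<in>{3..n}. 0 < p i \<and> p i < 1) \<longrightarrow>
      (\<forall>i\<in>{4..n-1}. p i * (1 - p (i - 1)) / ((if i - 2 = 2 then 1 else p (i - 2)) * (1 - p i)) > 1) \<longrightarrow>
      measure_pmf.prob (Ylaw p n) (Lambda2 n) > measure_pmf.prob (Ylaw p n) (Lambda1 n))
    \<and>
    (\<forall>\<theta> :: real. \<theta> > 0 \<longrightarrow>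
      measure_pmf.prob (etalaw \<theta> n) (Lambda2 n) > measure_pmf.prob (etalaw \<theta> n) (Lambda1 n) \<and>
      measure_pmf.prob (etalaw \<theta> n) (Lambda2 n) =
        (\<Sum>r\<in>Lambda1 n. (\<Prod>i=1..ones n r - 1.
            (real (sigma n r i) - 1) / (real (n + 1) - real (sigma n r i))) * pmf (etalaw \<theta> n) r))"
proof (intro conjI allI impI)
  fix p :: "nat \<Rightarrow> real"
  assume "\<forall>i\<in>{3..n}. 0 < p i \<and> p i < 1"
    and "\<forall>i\<in>{4..n-1}. p i * (1 - p (i - 1)) / ((if i - 2 = 2 then 1 else p (i - 2)) * (1 - p i)) > 1"
  then show "measure_pmf.prob (Ylaw p n) (Lambda2 n) > measure_pmf.prob (Ylaw p n) (Lambda1 n)"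
    by (rule prob_Ylaw_Lambda1_less_Lambda2[OF assms])
next
  fix \<theta> :: real
  assume "\<theta> > 0"
  then show "measure_pmf.prob (etalaw \<theta> n) (Lambda2 n) > measure_pmf.prob (etalaw \<theta> n) (Lambda1 n)"
    and "measure_pmf.prob (etalaw \<theta> n) (Lambda2 n) =
        (\<Sum>r\<in>Lambda1 n. (\<Prod>i=1..ones n r - 1.
            (real (sigma n r i) - 1) / (real (n + 1) - real (sigma n r i))) * pmf (etalaw \<theta> n) r)"
    using prob_etalaw_Lambda1_less_Lambda2 prob_etalaw_Lambda2_eq assms by auto
qed

end
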